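(* Let $R$ be a ring such that whenever $a,b\in R$ satisfy $a+b=1$, there exist $r,s\in R$ with $(1+ar)R(1+bs)\subseteq J(R)$. Then $R$ is feckly clean if and only if $\operatorname{Max}(R)$ is strongly zero-dimensional.
   Context: Rings are associative with identity, not necessarily commutative; ideals are two-sided; $J(R)$ is the Jacobson radical. An element $u\in R$ is full if $RuR=R$. An element $a\in R$ is feckly clean if there exist $e\in R$ and a full element $u\in R$ with $a=e+u$ and $eR(1-e)\subseteq J(R)$; $R$ is feckly clean if every element is feckly clean. $\operatorname{Max}(R)$ is the set of all maximal ideals of $R$, topologized so that the closed sets are exactly the sets $V(I)=\{P\in\operatorname{Max}(R): I\subseteq P\}$ for ideals $I$. A topological space $X$ is strongly zero-dimensional if for any two disjoint closed sets $A,B\subseteq X$ there exist disjoint clopen sets $C_1,C_2$ with $A\subseteq C_1$ and $B\subseteq C_2$. *)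

theory Defs
  imports Main
begin

text \<open>Rings: type class ring_1 (associative, with identity, not necessarily commutative).
  The ring R is the whole type.\<close>

definition left_ideal :: "'a::ring_1 set \<Rightarrow> bool" where
  "left_ideal I \<longleftrightarrow> 0 \<in> I \<and> (\<forall>x\<in>I. \<forall>y\<in>I. x + y \<in> I) \<and> (\<forall>x\<in>I. - x \<in> I)
     \<and> (\<forall>r x. x \<in> I \<longrightarrow> r * x \<in> I)"

definition two_sided_ideal :: "'a::ring_1 set \<Rightarrow> bool" where
  "two_sided_ideal I \<longleftrightarrow> 0 \<in> I \<and> (\<forall>x\<in>I. \<forall>y\<in>I. x + y \<in> I) \<and> (\<forall>x\<in>I. - x \<in> I)
     \<and> (\<forall>r x. x \<in> I \<longrightarrow> r * x \<in> I \<and> x * r \<in> I)"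

definition maximal_left_ideal :: "'a::ring_1 set \<Rightarrow> bool" where
  "maximal_left_ideal M \<longleftrightarrow> left_ideal M \<and> M \<noteq> UNIV \<and>
     (\<forall>I. left_ideal I \<and> M \<subseteq> I \<and> I \<noteq> UNIV \<longrightarrow> I = M)"

definition maximal_ideal :: "'a::ring_1 set \<Rightarrow> bool" where
  "maximal_ideal M \<longleftrightarrow> two_sided_ideal M \<and> M \<noteq> UNIV \<and>
     (\<forall>I. two_sided_ideal I \<and> M \<subseteq> I \<and> I \<noteq> UNIV \<longrightarrow> I = M)"

definition jacobson :: "'a::ring_1 set" where
  "jacobson = \<Inter> {M. maximal_left_ideal M}"

definition RuR :: "'a::ring_1 \<Rightarrow> 'a set" where
  "RuR u = {x. \<exists>(n::nat) r s. x = (\<Sum>i<n. r i * u * s i)}"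

definition full :: "'a::ring_1 \<Rightarrow> bool" where
  "full u \<longleftrightarrow> RuR u = UNIV"

definition feckly_clean_elem :: "'a::ring_1 \<Rightarrow> bool" where
  "feckly_clean_elem a \<longleftrightarrow> (\<exists>e u. a = e + u \<and> full u \<and>
       (\<forall>r. e * r * (1 - e) \<in> (jacobson :: 'a set)))"

definition feckly_clean_ring :: "'a::ring_1 itself \<Rightarrow> bool" where
  "feckly_clean_ring _ \<longleftrightarrow> (\<forall>a::'a. feckly_clean_elem a)"

definition MaxSpec :: "'a::ring_1 set set" where
  "MaxSpec = {M. maximal_ideal M}"

definition Vset :: "'a::ring_1 set \<Rightarrow> 'a set set" where
  "Vset I = {P \<in> MaxSpec. I \<subseteq> P}"

definition max_closed :: "'a::ring_1 set set \<Rightarrow> bool" where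
  "max_closed A \<longleftrightarrow> (\<exists>I. two_sided_ideal I \<and> A = Vset I)"

definition max_clopen :: "'a::ring_1 set set \<Rightarrow> bool" where
  "max_clopen C \<longleftrightarrow> max_closed C \<and> max_closed (MaxSpec - C)"

definition Max_strongly_zero_dim :: "'a::ring_1 itself \<Rightarrow> bool" where
  "Max_strongly_zero_dim _ \<longleftrightarrow>
     (\<forall>A B :: 'a set set. max_closed A \<and> max_closed B \<and> A \<inter> B = {} \<longrightarrow>
        (\<exists>C1 C2. max_clopen C1 \<and> max_clopen C2 \<and> C1 \<inter> C2 = {} \<and> A \<subseteq> C1 \<and> B \<subseteq> C2))"

end

theory Submission
  imports Defs
begin

text \<open>
  The pivot is the notion of an idempotent modulo the radical, \<open>eR(1 - e) \<subseteq> J(R)\<close>.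
  Since maximal ideals contain \<open>J(R)\<close> and are prime, each maximal ideal contains exactly one
  of \<open>e\<close>, \<open>1 - e\<close>, so \<open>V(1 - e)\<close> and \<open>V(e)\<close> are complementary clopen sets. Call \<open>e\<close>
  separating for \<open>a\<close> if \<open>V(a) \<subseteq> V(1 - e)\<close> and \<open>V(1 - a) \<subseteq> V(e)\<close>. Then
  (1) \<open>a\<close> is feckly clean iff it has a separating idempotent (with \<open>a = e + (a - e)\<close>);
  (2) if every element has one, \<open>Max(R)\<close> is strongly zero-dimensional;
  (3) under the lifting hypothesis, strong zero-dimensionality gives separating idempotents.
  Only (3) uses the hypothesis.
\<close>

lemma two_sided_ideal_iff_left_ideal:
  "two_sided_ideal I \<longleftrightarrow> left_ideal I \<and> (\<forall>r x. x \<in> I \<longrightarrow> x * r \<in> I)"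
  unfolding two_sided_ideal_def left_ideal_def by blast

lemma two_sided_ideal_imp_left_ideal: "two_sided_ideal I \<Longrightarrow> left_ideal I"
  by (simp add: two_sided_ideal_iff_left_ideal)

lemma ideal_zero: "two_sided_ideal I \<Longrightarrow> 0 \<in> I"
  unfolding two_sided_ideal_def by blast

lemma ideal_add: "two_sided_ideal I \<Longrightarrow> x \<in> I \<Longrightarrow> y \<in> I \<Longrightarrow> x + y \<in> I"
  unfolding two_sided_ideal_def by blast

lemma ideal_diff: "two_sided_ideal I \<Longrightarrow> x \<in> I \<Longrightarrow> y \<in> I \<Longrightarrow> x - y \<in> I"
  unfolding two_sided_ideal_def by (metis diff_conv_add_uminus)

lemma ideal_lmult: "two_sided_ideal I \<Longrightarrow> x \<in> I \<Longrightarrow> r * x \<in> I"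
  unfolding two_sided_ideal_def by blast

lemma ideal_rmult: "two_sided_ideal I \<Longrightarrow> x \<in> I \<Longrightarrow> x * r \<in> I"
  unfolding two_sided_ideal_def by blast

lemma left_ideal_eq_UNIV: "left_ideal I \<Longrightarrow> 1 \<in> I \<Longrightarrow> I = UNIV"
  unfolding left_ideal_def by (metis UNIV_eq_I mult.right_neutral)

lemma ideal_eq_UNIV: "two_sided_ideal I \<Longrightarrow> 1 \<in> I \<Longrightarrow> I = UNIV"
  by (rule left_ideal_eq_UNIV[OF two_sided_ideal_imp_left_ideal])

lemma left_ideal_sum:
  assumes "left_ideal I" "finite A" "\<And>i. i \<in> A \<Longrightarrow> f i \<in> I"
  shows "sum f A \<in> I"
  using assms(2,3)
proof (induction A rule: finite_induct)
  case empty then show ?case using assms(1) by (simp add: left_ideal_def)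
next
  case (insert i A) then show ?case using assms(1) by (simp add: left_ideal_def)
qed

lemma left_ideal_chain_Union:
  assumes "C \<noteq> {}" "subset.chain {I. left_ideal I} C"
  shows "left_ideal (\<Union>C)"
proof -
  have ideals: "\<And>I. I \<in> C \<Longrightarrow> left_ideal I"
    and comparable: "\<And>I K. I \<in> C \<Longrightarrow> K \<in> C \<Longrightarrow> I \<subseteq> K \<or> K \<subseteq> I"
    using assms(2) by (auto simp: subset_chain_def)
  have "x + y \<in> \<Union>C" if xy: "x \<in> \<Union>C" "y \<in> \<Union>C" for x y
  proof -
    obtain I K where IK: "I \<in> C" "K \<in> C" "x \<in> I" "y \<in> K" using xy by blast
    from comparable[OF IK(1,2)] show ?thesis
    proof
      assume "I \<subseteq> K"
      then have "x + y \<in> K" using ideals[OF IK(2)] IK(3,4) unfolding left_ideal_def by blast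
      then show ?thesis using IK(2) by blast
    next
      assume "K \<subseteq> I"
      then have "x + y \<in> I" using ideals[OF IK(1)] IK(3,4) unfolding left_ideal_def by blast
      then show ?thesis using IK(1) by blast
    qed
  qed
  then show ?thesis using assms(1) ideals unfolding left_ideal_def by blast
qed

lemma two_sided_ideal_chain_Union:
  assumes "C \<noteq> {}" "subset.chain {I. two_sided_ideal I} C"
  shows "two_sided_ideal (\<Union>C)"
proof -
  have "subset.chain {I. left_ideal I} C"
    using assms(2) two_sided_ideal_imp_left_ideal by (auto simp: subset_chain_def)
  then have "left_ideal (\<Union>C)" by (rule left_ideal_chain_Union[OF assms(1)])
  moreover have "x * r \<in> \<Union>C" if "x \<in> \<Union>C" for x r
    using that assms(2) ideal_rmult unfolding subset_chain_def by blast
  ultimately show ?thesis unfolding two_sided_ideal_iff_left_ideal by blast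
qed

section \<open>Existence of maximal ideals\<close>

lemma maximal_avoiding_extension:
  assumes chain_closed: "\<And>C. C \<noteq> {} \<Longrightarrow> subset.chain {J. Q J} C \<Longrightarrow> Q (\<Union>C)"
    and "Q I" "z \<notin> I"
  shows "\<exists>M. Q M \<and> I \<subseteq> M \<and> z \<notin> M \<and> (\<forall>J. Q J \<and> M \<subseteq> J \<and> z \<notin> J \<longrightarrow> J = M)"
proof -
  define A where "A = {J. Q J \<and> I \<subseteq> J \<and> z \<notin> J}"
  have "\<Union>C \<in> A" if "C \<noteq> {}" "subset.chain A C" for C
  proof -
    have CA: "C \<subseteq> A" using that(2) unfolding subset_chain_def by blast
    have "subset.chain {J. Q J} C" using that(2) unfolding A_def subset_chain_def by blast
    then have "Q (\<Union>C)" by (rule chain_closed[OF that(1)])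
    moreover have "I \<subseteq> \<Union>C" using CA that(1) unfolding A_def by blast
    moreover have "z \<notin> \<Union>C" using CA unfolding A_def by blast
    ultimately show ?thesis unfolding A_def by blast
  qed
  moreover have "A \<noteq> {}" using assms(2,3) unfolding A_def by blast
  ultimately obtain M where "M \<in> A" "\<forall>J\<in>A. M \<subseteq> J \<longrightarrow> J = M"
    using subset_Zorn_nonempty[of A] by blast
  then show ?thesis unfolding A_def by blast
qed

lemma exists_maximal_left_ideal:
  assumes "left_ideal I" "1 \<notin> I"
  shows "\<exists>L. maximal_left_ideal L \<and> I \<subseteq> L"
proof -
  obtain L where L: "left_ideal L" "I \<subseteq> L" "1 \<notin> L"
    and max: "\<forall>J. left_ideal J \<and> L \<subseteq> J \<and> 1 \<notin> J \<longrightarrow> J = L"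
    using maximal_avoiding_extension[OF left_ideal_chain_Union assms] by blast
  have "maximal_left_ideal L"
    unfolding maximal_left_ideal_def using L max left_ideal_eq_UNIV by blast
  then show ?thesis using L(2) by blast
qed

lemma exists_maximal_ideal:
  assumes "two_sided_ideal I" "1 \<notin> I"
  shows "\<exists>P. maximal_ideal P \<and> I \<subseteq> P"
proof -
  obtain P where P: "two_sided_ideal P" "I \<subseteq> P" "1 \<notin> P"
    and max: "\<forall>J. two_sided_ideal J \<and> P \<subseteq> J \<and> 1 \<notin> J \<longrightarrow> J = P"
    using maximal_avoiding_extension[OF two_sided_ideal_chain_Union assms] by blast
  have "maximal_ideal P"
    unfolding maximal_ideal_def using P max ideal_eq_UNIV by blast
  then show ?thesis using P(2) by blast
qed

lemma maximal_ideal_ideal: "maximal_ideal P \<Longrightarrow> two_sided_ideal P"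
  unfolding maximal_ideal_def by simp

lemma maximal_ideal_one: "maximal_ideal P \<Longrightarrow> 1 \<notin> P"
  unfolding maximal_ideal_def using ideal_eq_UNIV by blast

lemma RuR_I: "x = (\<Sum>i<(n::nat). r i * u * s i) \<Longrightarrow> x \<in> RuR u"
  unfolding RuR_def by blast

lemma RuR_E:
  assumes "x \<in> RuR u"
  obtains n :: nat and r s where "x = (\<Sum>i<n. r i * u * s i)"
  using assms unfolding RuR_def by blast

lemma RuR_mem: "u \<in> RuR u"
  by (rule RuR_I[where n = 1 and r = "\<lambda>_. 1" and s = "\<lambda>_. 1"]) simp

lemma RuR_add:
  assumes x: "x \<in> RuR u" and y: "y \<in> RuR u"
  shows "x + y \<in> RuR u"
proof -
  obtain m :: nat and r s where y_eq: "y = (\<Sum>i<m. r i * u * s i)" using y by (rule RuR_E)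
  have "x + (\<Sum>i<k. r i * u * s i) \<in> RuR u" for k
  proof (induction k)
    case 0 then show ?case using x by simp
  next
    case (Suc k)
    from Suc obtain n :: nat and r' s' where
      eq: "x + (\<Sum>i<k. r i * u * s i) = (\<Sum>i<n. r' i * u * s' i)" by (rule RuR_E)
    have "x + (\<Sum>i<Suc k. r i * u * s i)
          = (\<Sum>i<Suc n. (r'(n := r k)) i * u * (s'(n := s k)) i)"
      by (simp add: lessThan_Suc add.assoc[symmetric] eq)
    then show ?case by (rule RuR_I)
  qed
  then show ?thesis using y_eq by simp
qed

lemma RuR_neg: "x \<in> RuR u \<Longrightarrow> - x \<in> RuR u"
  by (erule RuR_E, rule RuR_I[where r = "\<lambda>i. - _ i"]) (simp add: sum_negf)

lemma RuR_lmult: "x \<in> RuR u \<Longrightarrow> t * x \<in> RuR u"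
  by (erule RuR_E, rule RuR_I[where r = "\<lambda>i. t * _ i"]) (simp add: sum_distrib_left mult.assoc)

lemma RuR_rmult: "x \<in> RuR u \<Longrightarrow> x * t \<in> RuR u"
  by (erule RuR_E, rule RuR_I[where s = "\<lambda>i. _ i * t"]) (simp add: sum_distrib_right mult.assoc)

lemma two_sided_ideal_RuR: "two_sided_ideal (RuR u)"
  unfolding two_sided_ideal_def
  using RuR_I[where n = 0] RuR_add RuR_neg RuR_lmult RuR_rmult by auto

lemma RuR_least:
  assumes "two_sided_ideal P" "u \<in> P"
  shows "RuR u \<subseteq> P"
proof
  fix x assume "x \<in> RuR u"
  then obtain n :: nat and r s where "x = (\<Sum>i<n. r i * u * s i)" by (rule RuR_E)
  moreover have "r i * u * s i \<in> P" for i using assms ideal_lmult ideal_rmult by blast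
  ultimately show "x \<in> P"
    using left_ideal_sum[OF two_sided_ideal_imp_left_ideal[OF assms(1)] finite_lessThan] by simp
qed

text \<open>If \<open>xRy \<subseteq> P\<close> then \<open>(RxR)R(RyR) \<subseteq> P\<close>: the elements \<open>z\<close> with \<open>zRy \<subseteq> P\<close>, and
  those \<open>w\<close> with \<open>xRw \<subseteq> P\<close>, form two-sided ideals.\<close>
lemma ideal_left_factors:
  assumes "two_sided_ideal P"
  shows "two_sided_ideal {z. \<forall>t. z * t * y \<in> P}"
  using assms unfolding two_sided_ideal_def
  by (auto simp: distrib_left distrib_right mult.assoc[symmetric])
    (metis mult.assoc)+

lemma ideal_right_factors:
  assumes "two_sided_ideal P"
  shows "two_sided_ideal {w. \<forall>t. x * t * w \<in> P}"
  using assms unfolding two_sided_ideal_def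
  by (auto simp: distrib_left distrib_right mult.assoc)
    (metis mult.assoc)+

lemma RuR_sandwich:
  assumes P: "two_sided_ideal P" and xy: "\<forall>t. x * t * y \<in> P"
    and e: "e \<in> RuR x" and f: "f \<in> RuR y"
  shows "e * t * f \<in> P"
proof -
  have "RuR x \<subseteq> {z. \<forall>t. z * t * y \<in> P}"
    using xy by (intro RuR_least ideal_left_factors P) simp
  then have "\<forall>t. e * t * y \<in> P" using e by blast
  then have "RuR y \<subseteq> {w. \<forall>t. e * t * w \<in> P}"
    by (intro RuR_least ideal_right_factors P) simp
  then show ?thesis using f by blast
qed

section \<open>Comaximal ideals and primeness of maximal ideals\<close>

definition ideal_sum :: "'a::ring_1 set \<Rightarrow> 'a set \<Rightarrow> 'a set" where
  "ideal_sum I K = {p + q | p q. p \<in> I \<and> q \<in> K}"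

lemma ideal_sum_memI: "p \<in> I \<Longrightarrow> q \<in> K \<Longrightarrow> p + q \<in> ideal_sum I K"
  unfolding ideal_sum_def by blast

lemma two_sided_ideal_sum:
  assumes I: "two_sided_ideal I" and K: "two_sided_ideal K"
  shows "two_sided_ideal (ideal_sum I K)"
proof -
  have add: "x + y \<in> ideal_sum I K" if xy: "x \<in> ideal_sum I K" "y \<in> ideal_sum I K" for x y
  proof -
    obtain p q p' q' where "x = p + q" "y = p' + q'" "p \<in> I" "q \<in> K" "p' \<in> I" "q' \<in> K"
      using xy unfolding ideal_sum_def by blast
    moreover have "p + q + (p' + q') = (p + p') + (q + q')" by (simp add: algebra_simps)
    ultimately show ?thesis using ideal_sum_memI ideal_add I K by metis
  qed
  have mult: "- x \<in> ideal_sum I K" "r * x \<in> ideal_sum I K" "x * r \<in> ideal_sum I K"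
    if x: "x \<in> ideal_sum I K" for x r
  proof -
    obtain p q where pq: "x = p + q" "p \<in> I" "q \<in> K"
      using x unfolding ideal_sum_def by blast
    have "- x = - p + - q" "r * x = r * p + r * q" "x * r = p * r + q * r"
      using pq(1) by (simp_all add: algebra_simps)
    then show "- x \<in> ideal_sum I K" "r * x \<in> ideal_sum I K" "x * r \<in> ideal_sum I K"
      using pq(2,3) I K ideal_sum_memI unfolding two_sided_ideal_def by metis+
  qed
  have "0 + 0 \<in> ideal_sum I K"
    by (rule ideal_sum_memI[OF ideal_zero[OF I] ideal_zero[OF K]])
  then show ?thesis unfolding two_sided_ideal_def by (simp add: add mult)
qed

lemma ideal_sum_upper:
  assumes "two_sided_ideal I" "two_sided_ideal K"
  shows "I \<subseteq> ideal_sum I K" "K \<subseteq> ideal_sum I K"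
  using ideal_sum_memI[OF _ ideal_zero[OF assms(2)]] ideal_sum_memI[OF ideal_zero[OF assms(1)]]
  by force+

lemma comaximal_ideals:
  assumes I: "two_sided_ideal I" and K: "two_sided_ideal K"
    and no_common: "\<And>P. maximal_ideal P \<Longrightarrow> I \<subseteq> P \<Longrightarrow> K \<subseteq> P \<Longrightarrow> False"
  obtains i k where "i \<in> I" "k \<in> K" "i + k = 1"
proof -
  have "1 \<in> ideal_sum I K"
  proof (rule ccontr)
    assume "1 \<notin> ideal_sum I K"
    then obtain P where "maximal_ideal P" "ideal_sum I K \<subseteq> P"
      using exists_maximal_ideal[OF two_sided_ideal_sum[OF I K]] by blast
    then show False using no_common ideal_sum_upper[OF I K] by blast
  qed
  then obtain i k where "1 = i + k" "i \<in> I" "k \<in> K" unfolding ideal_sum_def by blast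
  then show ?thesis using that by simp
qed

lemma maximal_ideal_prime:
  assumes P: "maximal_ideal P" and xy: "\<forall>t. x * t * y \<in> P" and x: "x \<notin> P"
  shows "y \<in> P"
proof -
  have P_ideal: "two_sided_ideal P" using P by (rule maximal_ideal_ideal)
  have "False" if Q: "maximal_ideal Q" "P \<subseteq> Q" "RuR x \<subseteq> Q" for Q
  proof -
    have "Q = P" using P Q unfolding maximal_ideal_def by blast
    then show False using x Q(3) RuR_mem by blast
  qed
  then obtain p q where pq: "p \<in> P" "q \<in> RuR x" "p + q = 1"
    using comaximal_ideals[OF P_ideal two_sided_ideal_RuR] by metis
  have "p * y \<in> P" using pq(1) P_ideal ideal_rmult by blast
  moreover have "q * 1 * y \<in> P" using RuR_sandwich[OF P_ideal xy pq(2) RuR_mem] .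
  ultimately have "p * y + q * y \<in> P" using P_ideal ideal_add by simp
  also have "p * y + q * y = y" by (simp flip: distrib_right add: pq(3))
  finally show ?thesis .
qed

section \<open>The Jacobson radical\<close>

lemma left_ideal_adjoin:
  assumes L: "left_ideal L"
  shows "left_ideal {l + z * a | l z. l \<in> L}" (is "left_ideal ?S")
proof -
  have add: "x + y \<in> ?S" if xy: "x \<in> ?S" "y \<in> ?S" for x y
  proof -
    obtain l z l' z' where "x = l + z * a" "y = l' + z' * a" "l \<in> L" "l' \<in> L"
      using xy by blast
    moreover have "l + z * a + (l' + z' * a) = (l + l') + (z + z') * a"
      by (simp add: algebra_simps)
    ultimately show ?thesis using L unfolding left_ideal_def by blast
  qed
  have mult: "- x \<in> ?S" "c * x \<in> ?S" if x: "x \<in> ?S" for x c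
  proof -
    obtain l z where lz: "x = l + z * a" "l \<in> L" using x by blast
    have "- x = - l + (- z) * a" "c * x = c * l + (c * z) * a"
      using lz(1) by (simp_all add: algebra_simps)
    then show "- x \<in> ?S" "c * x \<in> ?S" using lz(2) L unfolding left_ideal_def by blast+
  qed
  have "0 + 0 * a \<in> ?S" using L unfolding left_ideal_def by blast
  then show ?thesis unfolding left_ideal_def using add mult by simp
qed

lemma left_ideal_quotient:
  assumes "left_ideal L"
  shows "left_ideal {y. y * r \<in> L}"
  using assms unfolding left_ideal_def by (simp add: distrib_right mult.assoc)

lemma maximal_left_ideal_adjoin:
  assumes L: "maximal_left_ideal L" and a: "a \<notin> L"
  obtains l z where "l \<in> L" "x = l + z * a"
proof -
  let ?S = "{l + z * a | l z. l \<in> L}"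
  have L_ideal: "left_ideal L" using L unfolding maximal_left_ideal_def by simp
  have "L \<subseteq> ?S" by (force intro: exI[of _ 0])
  moreover have "a \<in> ?S - L"
    using a L_ideal unfolding left_ideal_def by (force intro: exI[of _ 0] exI[of _ 1])
  ultimately have "?S = UNIV"
    using L left_ideal_adjoin[OF L_ideal] unfolding maximal_left_ideal_def by blast
  then show ?thesis using that by blast
qed

text \<open>The quotient \<open>(L : r)\<close> of a maximal left ideal by an element outside it is again
  maximal (it is the annihilator of the generator \<open>r + L\<close> of the simple module \<open>R/L\<close>).\<close>
lemma maximal_left_ideal_quotient:
  assumes L: "maximal_left_ideal L" and r: "r \<notin> L"
  shows "maximal_left_ideal {y. y * r \<in> L}"
proof -
  have L_ideal: "left_ideal L" using L unfolding maximal_left_ideal_def by simp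
  have "I = {y. y * r \<in> L}"
    if I: "left_ideal I" "{y. y * r \<in> L} \<subseteq> I" "I \<noteq> UNIV" for I
  proof (rule ccontr)
    assume "I \<noteq> {y. y * r \<in> L}"
    then obtain y where y: "y \<in> I" "y * r \<notin> L" using I(2) by blast
    obtain l z where lz: "l \<in> L" "r = l + z * (y * r)"
      using maximal_left_ideal_adjoin[OF L y(2)] by metis
    have "(1 - z * y) * r = l" using lz(2) by (simp add: algebra_simps)
    then have "1 - z * y \<in> I" using lz(1) I(2) by auto
    moreover have "z * y \<in> I" using I(1) y(1) unfolding left_ideal_def by blast
    ultimately have "(1 - z * y) + z * y \<in> I" using I(1) unfolding left_ideal_def by blast
    then show False using I(1,3) left_ideal_eq_UNIV by auto
  qed
  moreover have "{y. y * r \<in> L} \<noteq> UNIV"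
    using r by (metis UNIV_I mem_Collect_eq mult_1)
  ultimately show ?thesis
    using left_ideal_quotient[OF L_ideal] unfolding maximal_left_ideal_def by blast
qed

lemma left_ideal_Inter:
  assumes "\<And>M. M \<in> F \<Longrightarrow> left_ideal M"
  shows "left_ideal (\<Inter>F)"
  using assms unfolding left_ideal_def by (intro conjI ballI allI impI InterI) auto

lemma jacobson_rmult:
  assumes "z \<in> jacobson"
  shows "z * r \<in> jacobson"
  unfolding jacobson_def
proof
  fix L :: "'a set" assume "L \<in> {M. maximal_left_ideal M}"
  then have L: "maximal_left_ideal L" by simp
  show "z * r \<in> L"
  proof (cases "r \<in> L")
    case True
    have "left_ideal L" using L unfolding maximal_left_ideal_def by simp
    then show ?thesis using True unfolding left_ideal_def by simp
  next
    case False
    then have "z \<in> {y. y * r \<in> L}"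
      using maximal_left_ideal_quotient[OF L] assms unfolding jacobson_def by blast
    then show ?thesis by simp
  qed
qed

lemma two_sided_ideal_jacobson: "two_sided_ideal (jacobson :: 'a::ring_1 set)"
proof -
  have "left_ideal (jacobson :: 'a set)"
    unfolding jacobson_def by (rule left_ideal_Inter) (simp add: maximal_left_ideal_def)
  then show ?thesis unfolding two_sided_ideal_iff_left_ideal using jacobson_rmult by blast
qed

text \<open>The radical lies in every maximal two-sided ideal \<open>P\<close>: choosing a maximal left ideal
  \<open>L \<supseteq> P\<close>, the largest two-sided ideal inside \<open>L\<close> contains \<open>P\<close>, hence equals \<open>P\<close>.\<close>
lemma jacobson_subset_maximal_ideal:
  assumes P: "maximal_ideal P"
  shows "jacobson \<subseteq> P"
proof -
  have P_ideal: "two_sided_ideal P" and "1 \<notin> P" using P maximal_ideal_ideal maximal_ideal_one by auto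
  then obtain L where L: "maximal_left_ideal L" "P \<subseteq> L"
    using exists_maximal_left_ideal two_sided_ideal_imp_left_ideal by blast
  define core where "core = {z. \<forall>r. z * r \<in> L}"
  have L_ideal: "left_ideal L" "L \<noteq> UNIV" using L(1) unfolding maximal_left_ideal_def by auto
  then have "two_sided_ideal core"
    unfolding core_def two_sided_ideal_def left_ideal_def by (simp add: distrib_right mult.assoc)
  moreover have "P \<subseteq> core" unfolding core_def using P_ideal L(2) ideal_rmult by blast
  moreover have "core \<noteq> UNIV" using L_ideal left_ideal_eq_UNIV unfolding core_def by force
  ultimately have "core = P" using P unfolding maximal_ideal_def by blast
  moreover have "jacobson \<subseteq> core"
    unfolding core_def using L(1) jacobson_rmult unfolding jacobson_def by blast
  ultimately show ?thesis by simp
qed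

lemma Vset_RuR: "Vset (RuR x) = {P. maximal_ideal P \<and> x \<in> P}"
  unfolding Vset_def MaxSpec_def using RuR_mem RuR_least maximal_ideal_ideal by blast

lemma max_closed_Vset_RuR: "max_closed (Vset (RuR x))"
  unfolding max_closed_def using two_sided_ideal_RuR by blast

lemma disjoint_Vset_comaximal:
  assumes "two_sided_ideal I" "two_sided_ideal K" "Vset I \<inter> Vset K = {}"
  obtains i k where "i \<in> I" "k \<in> K" "i + k = 1"
  using comaximal_ideals[OF assms(1,2)] assms(3) unfolding Vset_def MaxSpec_def by blast

lemma full_iff_not_in_maximal: "full u \<longleftrightarrow> (\<forall>P. maximal_ideal P \<longrightarrow> u \<notin> P)"
proof
  assume "full u"
  then show "\<forall>P. maximal_ideal P \<longrightarrow> u \<notin> P"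
    unfolding full_def using RuR_least maximal_ideal_ideal maximal_ideal_one by blast
next
  assume "\<forall>P. maximal_ideal P \<longrightarrow> u \<notin> P"
  then have "1 \<in> RuR u"
    using exists_maximal_ideal[OF two_sided_ideal_RuR] RuR_mem by blast
  then show "full u" unfolding full_def using ideal_eq_UNIV two_sided_ideal_RuR by blast
qed

lemma one_plus_notin_maximal:
  assumes "maximal_ideal P" "a \<in> P"
  shows "1 + a * r \<notin> P"
  using assms maximal_ideal_ideal maximal_ideal_one ideal_diff ideal_rmult
  by (metis add_diff_cancel_right')

section \<open>Idempotents modulo the Jacobson radical\<close>

definition idempotent_mod_jacobson :: "'a::ring_1 \<Rightarrow> bool" where
  "idempotent_mod_jacobson e \<longleftrightarrow> (\<forall>r. e * r * (1 - e) \<in> jacobson)"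

lemma idempotent_mod_jacobson_dichotomy:
  assumes e: "idempotent_mod_jacobson e" and P: "maximal_ideal P"
  shows "e \<in> P \<longleftrightarrow> 1 - e \<notin> P"
proof -
  have "\<forall>t. e * t * (1 - e) \<in> P"
    using e jacobson_subset_maximal_ideal[OF P] unfolding idempotent_mod_jacobson_def by blast
  then have "e \<in> P \<or> 1 - e \<in> P" using maximal_ideal_prime[OF P] by blast
  moreover have "\<not> (e \<in> P \<and> 1 - e \<in> P)"
    using P maximal_ideal_ideal maximal_ideal_one ideal_add by fastforce
  ultimately show ?thesis by blast
qed

lemma Vset_idempotent_complement:
  assumes "idempotent_mod_jacobson e"
  shows "MaxSpec - Vset (RuR (1 - e)) = Vset (RuR e)"
    and "MaxSpec - Vset (RuR e) = Vset (RuR (1 - e))"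
  using idempotent_mod_jacobson_dichotomy[OF assms] unfolding Vset_RuR MaxSpec_def by auto

lemma max_clopen_idempotent:
  assumes "idempotent_mod_jacobson e"
  shows "max_clopen (Vset (RuR (1 - e)))" "max_clopen (Vset (RuR e))"
  unfolding max_clopen_def Vset_idempotent_complement[OF assms]
  by (simp_all add: max_closed_Vset_RuR)

definition separating_idempotent :: "'a::ring_1 \<Rightarrow> 'a \<Rightarrow> bool" where
  "separating_idempotent e a \<longleftrightarrow> idempotent_mod_jacobson e \<and>
     (\<forall>P. maximal_ideal P \<longrightarrow> a \<in> P \<longrightarrow> 1 - e \<in> P) \<and>
     (\<forall>P. maximal_ideal P \<longrightarrow> 1 - a \<in> P \<longrightarrow> e \<in> P)"

text \<open>An element \<open>a\<close> is feckly clean iff it has a separating idempotent: the full part of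
  \<open>a = e + u\<close> is then \<open>u = a - e\<close>.\<close>
lemma feckly_clean_elem_iff_separating:
  "feckly_clean_elem a \<longleftrightarrow> (\<exists>e. separating_idempotent e a)"
proof
  assume "feckly_clean_elem a"
  then obtain e u where eu: "a = e + u" "full u" "idempotent_mod_jacobson e"
    unfolding feckly_clean_elem_def idempotent_mod_jacobson_def by blast
  have "1 - e \<in> P" if P: "maximal_ideal P" "a \<in> P" for P
  proof (rule ccontr)
    assume "1 - e \<notin> P"
    then have "a - e \<in> P"
      using P idempotent_mod_jacobson_dichotomy[OF eu(3)] maximal_ideal_ideal ideal_diff by blast
    then show False using eu(1,2) P(1) full_iff_not_in_maximal by auto
  qed
  moreover have "e \<in> P" if P: "maximal_ideal P" "1 - a \<in> P" for P
  proof (rule ccontr)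
    assume "e \<notin> P"
    then have "(1 - e) - (1 - a) \<in> P"
      using P idempotent_mod_jacobson_dichotomy[OF eu(3)] maximal_ideal_ideal ideal_diff by blast
    then show False using eu(1,2) P(1) full_iff_not_in_maximal by (auto simp: algebra_simps)
  qed
  ultimately show "\<exists>e. separating_idempotent e a"
    using eu(3) unfolding separating_idempotent_def by blast
next
  assume "\<exists>e. separating_idempotent e a"
  then obtain e where e: "idempotent_mod_jacobson e"
    and sep: "\<And>P. maximal_ideal P \<Longrightarrow> a \<in> P \<Longrightarrow> 1 - e \<in> P"
      "\<And>P. maximal_ideal P \<Longrightarrow> 1 - a \<in> P \<Longrightarrow> e \<in> P"
    unfolding separating_idempotent_def by blast
  have "a - e \<notin> P" if P: "maximal_ideal P" for P
  proof
    assume u: "a - e \<in> P"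
    have dich: "e \<in> P \<longleftrightarrow> 1 - e \<notin> P" by (rule idempotent_mod_jacobson_dichotomy[OF e P])
    have P_ideal: "two_sided_ideal P" using P by (rule maximal_ideal_ideal)
    show False
    proof (cases "e \<in> P")
      case True
      then have "(a - e) + e \<in> P" using u P_ideal ideal_add by blast
      then show False using sep(1)[OF P] dich True by simp
    next
      case False
      then have "(1 - e) - (a - e) \<in> P" using u P_ideal ideal_diff dich by blast
      then show False using sep(2)[OF P] False by simp
    qed
  qed
  then have "full (a - e)" by (simp add: full_iff_not_in_maximal)
  then show "feckly_clean_elem a"
    using e unfolding feckly_clean_elem_def idempotent_mod_jacobson_def
    by (metis add_diff_cancel_left' add_diff_eq)
qed

section \<open>Separating idempotents and strong zero-dimensionality\<close>

text \<open>If every element has a separating idempotent, disjoint closed sets \<open>V(I)\<close>, \<open>V(K)\<close>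
  are separated by the clopen sets \<open>V(1 - e)\<close>, \<open>V(e)\<close>, where \<open>e\<close> separates \<open>i \<in> I\<close> with
  \<open>1 - i \<in> K\<close>.\<close>
lemma separation_imp_strongly_zero_dim:
  assumes sep: "\<forall>a::'a::ring_1. \<exists>e. separating_idempotent e a"
  shows "Max_strongly_zero_dim TYPE('a)"
  unfolding Max_strongly_zero_dim_def
proof (intro allI impI)
  fix A B :: "'a set set"
  assume "max_closed A \<and> max_closed B \<and> A \<inter> B = {}"
  then obtain I K where IK: "two_sided_ideal I" "A = Vset I" "two_sided_ideal K" "B = Vset K"
    and disjoint: "A \<inter> B = {}"
    unfolding max_closed_def by blast
  obtain i k where ik: "i \<in> I" "k \<in> K" "i + k = 1"
    using disjoint_Vset_comaximal IK disjoint by metis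
  have k_eq: "k = 1 - i" using ik(3) by (simp add: algebra_simps)
  obtain e where e: "idempotent_mod_jacobson e"
    and sep_e: "\<And>P. maximal_ideal P \<Longrightarrow> i \<in> P \<Longrightarrow> 1 - e \<in> P"
      "\<And>P. maximal_ideal P \<Longrightarrow> 1 - i \<in> P \<Longrightarrow> e \<in> P"
    using sep unfolding separating_idempotent_def by blast
  note clopen = max_clopen_idempotent[OF e]
  note compl = Vset_idempotent_complement(1)[OF e]
  have "A \<subseteq> Vset (RuR (1 - e))"
    using IK(2) ik(1) sep_e(1) unfolding Vset_RuR unfolding Vset_def MaxSpec_def by blast
  moreover have "B \<subseteq> Vset (RuR e)"
    using IK(4) ik(2) k_eq sep_e(2) unfolding Vset_RuR unfolding Vset_def MaxSpec_def by blast
  moreover have "Vset (RuR (1 - e)) \<inter> Vset (RuR e) = {}" using compl by blast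
  ultimately show "\<exists>C1 C2. max_clopen C1 \<and> max_clopen C2 \<and> C1 \<inter> C2 = {} \<and> A \<subseteq> C1 \<and> B \<subseteq> C2"
    using clopen by blast
qed

text \<open>The lifting step, the only use of the hypothesis of the theorem: if every
  maximal ideal contains \<open>a\<close> or \<open>1 - a\<close>, choose \<open>r, s\<close> with
  \<open>xRy \<subseteq> J(R)\<close> for \<open>x = 1 + ar\<close>, \<open>y = 1 + (1 - a)s\<close>. No maximal ideal contains both \<open>x\<close> and
  \<open>y\<close>, so \<open>e + f = 1\<close> for some \<open>e \<in> RxR\<close>, \<open>f \<in> RyR\<close>, and \<open>e\<close> separates \<open>a\<close>.\<close>
lemma lift_separating_idempotent:
  fixes a :: "'a::ring_1"
  assumes lifting: "\<forall>a b :: 'a. a + b = 1 \<longrightarrow>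
             (\<exists>r s. \<forall>t. (1 + a * r) * t * (1 + b * s) \<in> (jacobson :: 'a set))"
    and cover: "\<And>P. maximal_ideal P \<Longrightarrow> a \<in> P \<or> 1 - a \<in> P"
  shows "\<exists>e. separating_idempotent e a"
proof -
  obtain r s where rs: "\<forall>t. (1 + a * r) * t * (1 + (1 - a) * s) \<in> (jacobson :: 'a set)"
    using lifting[rule_format, of a "1 - a"] by auto
  define x where "x = 1 + a * r"
  define y where "y = 1 + (1 - a) * s"
  have x_out: "x \<notin> P" if "maximal_ideal P" "a \<in> P" for P
    unfolding x_def using one_plus_notin_maximal that .
  have y_out: "y \<notin> P" if "maximal_ideal P" "1 - a \<in> P" for P
    unfolding y_def using one_plus_notin_maximal that .
  have xy: "\<forall>t. x * t * y \<in> jacobson" using rs unfolding x_def y_def .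
  have "False" if "maximal_ideal P" "RuR x \<subseteq> P" "RuR y \<subseteq> P" for P
    using that cover x_out y_out RuR_mem by blast
  then obtain e f where ef: "e \<in> RuR x" "f \<in> RuR y" "e + f = 1"
    using comaximal_ideals[OF two_sided_ideal_RuR two_sided_ideal_RuR] by metis
  have f_eq: "f = 1 - e" using ef(3) by (simp add: algebra_simps)
  have prime: "x \<in> P \<or> y \<in> P" if "maximal_ideal P" for P
    using maximal_ideal_prime[OF that] xy jacobson_subset_maximal_ideal[OF that] by blast
  have "idempotent_mod_jacobson e"
    unfolding idempotent_mod_jacobson_def
    using RuR_sandwich[OF two_sided_ideal_jacobson xy ef(1,2)] f_eq by blast
  moreover have "1 - e \<in> P" if "maximal_ideal P" "a \<in> P" for P
    using that prime x_out ef(2) f_eq RuR_least maximal_ideal_ideal by blast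
  moreover have "e \<in> P" if "maximal_ideal P" "1 - a \<in> P" for P
    using that prime y_out ef(1) RuR_least maximal_ideal_ideal by blast
  ultimately show ?thesis unfolding separating_idempotent_def by blast
qed

text \<open>Separate \<open>V(a)\<close> from \<open>V(1 - a)\<close> by a clopen \<open>C = V(I)\<close> with
  complement \<open>V(K)\<close>; comaximality gives \<open>i \<in> I\<close>, \<open>1 - i \<in> K\<close>, every maximal ideal contains
  \<open>i\<close> or \<open>1 - i\<close>, and an idempotent separating \<open>i\<close> also separates \<open>a\<close>.\<close>
lemma strongly_zero_dim_imp_separation:
  assumes lifting: "\<forall>a b :: 'a::ring_1. a + b = 1 \<longrightarrow>
             (\<exists>r s. \<forall>t. (1 + a * r) * t * (1 + b * s) \<in> (jacobson :: 'a set))"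
    and szd: "Max_strongly_zero_dim TYPE('a)"
  shows "\<exists>e. separating_idempotent e (a :: 'a)"
proof -
  have "Vset (RuR a) \<inter> Vset (RuR (1 - a)) = {}"
    unfolding Vset_RuR using maximal_ideal_ideal maximal_ideal_one ideal_add by fastforce
  then obtain C D where C: "max_clopen C" "C \<inter> D = {}" "Vset (RuR a) \<subseteq> C" "Vset (RuR (1 - a)) \<subseteq> D"
    using szd max_closed_Vset_RuR unfolding Max_strongly_zero_dim_def by blast
  obtain I K where IK: "two_sided_ideal I" "C = Vset I" "two_sided_ideal K" "MaxSpec - C = Vset K"
    using C(1) unfolding max_clopen_def max_closed_def by blast
  obtain i k where ik: "i \<in> I" "k \<in> K" "i + k = 1"
    using disjoint_Vset_comaximal[OF IK(1,3)] IK(2,4) by blast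
  have k_eq: "k = 1 - i" using ik(3) by (simp add: algebra_simps)
  have in_C: "P \<in> C \<Longrightarrow> i \<in> P" and out_C: "maximal_ideal P \<Longrightarrow> P \<notin> C \<Longrightarrow> 1 - i \<in> P" for P
    using IK ik(1,2) k_eq unfolding Vset_def MaxSpec_def by blast+
  obtain e where e: "idempotent_mod_jacobson e"
    and sep_e: "\<And>P. maximal_ideal P \<Longrightarrow> i \<in> P \<Longrightarrow> 1 - e \<in> P"
      "\<And>P. maximal_ideal P \<Longrightarrow> 1 - i \<in> P \<Longrightarrow> e \<in> P"
    using lift_separating_idempotent[OF lifting, of i] in_C out_C
    unfolding separating_idempotent_def by blast
  have "1 - e \<in> P" if "maximal_ideal P" "a \<in> P" for P
    using that C(3) in_C sep_e(1) unfolding Vset_RuR by blast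
  moreover have "e \<in> P" if "maximal_ideal P" "1 - a \<in> P" for P
    using that C(2,4) out_C sep_e(2) unfolding Vset_RuR by blast
  ultimately show ?thesis using e unfolding separating_idempotent_def by blast
qed

text \<open>Both properties are equivalent to every element having a separating idempotent.\<close>
theorem corollary3p7:
  assumes "\<forall>a b :: 'a::ring_1. a + b = 1 \<longrightarrow>
             (\<exists>r s. \<forall>t. (1 + a * r) * t * (1 + b * s) \<in> (jacobson :: 'a set))"
  shows "feckly_clean_ring TYPE('a) \<longleftrightarrow> Max_strongly_zero_dim TYPE('a)"
proof -
  have "feckly_clean_ring TYPE('a) \<longleftrightarrow> (\<forall>a::'a. \<exists>e. separating_idempotent e a)"
    unfolding feckly_clean_ring_def using feckly_clean_elem_iff_separating by blast
  then show ?thesis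
    using separation_imp_strongly_zero_dim strongly_zero_dim_imp_separation[OF assms] by blast
qed

end
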